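(* Let $s\ge 1$, integers $0=m_0<m_1<\cdots<m_s$ and $n_0>n_1>\cdots>n_s=0$, let $\mathsf T$ be the initial segment determined by $\bm E=(y^{n_0},x^{m_1}y^{n_1},\dots,x^{m_{s-1}}y^{n_{s-1}},x^{m_s})$, and let $\mathsf S=(\{0,\dots,m_s-1\}\times\{0,\dots,n_0-1\})\setminus\mathsf T$. For $i=1,\dots,s-1$ let $h_i=2^{\mathrm{val}_2(i)}$, $\ell_i=\min(h_i,s-i)$ and $$\mathsf R_i=\{m_i,\dots,m_{i+\ell_i}-1\}\times\{n_i,\dots,n_{i-h_i}-1\}.$$ Then $i+\ell_i\le s$ and $i-h_i\ge 0$ for all $i$, the rectangles $\mathsf R_1,\dots,\mathsf R_{s-1}$ are pairwise disjoint, and their union is exactly $\mathsf S$.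
   Context: $\mathrm{val}_2(i)$ denotes the $2$-adic valuation of the positive integer $i$. The initial segment determined by a list of monomials $\bm E$ is the set of $(u,v)\in\mathbb N^2$ such that $x^uy^v$ is not in the monomial ideal generated by $\bm E$; here $\mathsf T=\{(u,v): \text{for the unique } k \text{ with } m_k\le u<m_{k+1},\ v<n_k\}$ restricted to $u<m_s$. *)

theory Defs
  imports Main "HOL-Computational_Algebra.Primes"
begin

definition val2 :: "nat \<Rightarrow> nat" where
  "val2 i = multiplicity (2::nat) i"

text \<open>Initial segment determined by E = (x^(m k) y^(n k))_(k=0..s): exponent pairs (u,v)
  such that x^u y^v is not divisible by any generator x^(m k) y^(n k), k = 0..s.\<close>
definition initSeg :: "nat \<Rightarrow> (nat \<Rightarrow> nat) \<Rightarrow> (nat \<Rightarrow> nat) \<Rightarrow> (nat \<times> nat) set" where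
  "initSeg s m n = {(u, v). \<not> (\<exists>k\<le>s. m k \<le> u \<and> n k \<le> v)}"

definition Sset :: "nat \<Rightarrow> (nat \<Rightarrow> nat) \<Rightarrow> (nat \<Rightarrow> nat) \<Rightarrow> (nat \<times> nat) set" where
  "Sset s m n = ({0..<m s} \<times> {0..<n 0}) - initSeg s m n"

definition hh :: "nat \<Rightarrow> nat" where
  "hh i = 2 ^ val2 i"

definition ell :: "nat \<Rightarrow> nat \<Rightarrow> nat" where
  "ell s i = min (hh i) (s - i)"

definition Rect :: "nat \<Rightarrow> (nat \<Rightarrow> nat) \<Rightarrow> (nat \<Rightarrow> nat) \<Rightarrow> nat \<Rightarrow> (nat \<times> nat) set" where
  "Rect s m n i = {m i ..< m (i + ell s i)} \<times> {n i ..< n (i - hh i)}"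

end

theory Submission imports Defs begin

text \<open>The rectangle \<open>[0, m s) \<times> [0, n 0)\<close> is tiled by the cells
  \<open>[m j, m (j+1)) \<times> [n (t+1), n t)\<close>, and such a cell lies in \<open>S\<close> exactly when \<open>t < j\<close>.
  The rectangle \<open>R i\<close> is the union of the cells with \<open>j < s\<close>, \<open>i \<le> j < i + h i\<close> and
  \<open>i - h i \<le> t < i\<close>. So everything reduces to a statement about the integers alone:
  for \<open>1 \<le> a \<le> b\<close> there is exactly one \<open>i \<in> [a, b]\<close> whose dyadic window
  \<open>(i - h i, i + h i)\<close> contains \<open>[a, b]\<close>. Existence: take \<open>i\<close> of maximal 2-adic
  valuation in \<open>[a, b]\<close>; since \<open>i / h i\<close> is odd, \<open>i \<pm> h i\<close> are divisible by \<open>2 h i\<close>,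
  so they have larger valuation and lie outside \<open>[a, b]\<close>. Uniqueness: of two such
  indices, the one of smaller valuation has \<open>h\<close> dividing both, yet they are closer
  than that \<open>h\<close>.\<close>

lemma hh_dvd: "hh i dvd i"
  unfolding hh_def val2_def by (rule multiplicity_dvd)

lemma hh_pos: "0 < hh i"
  unfolding hh_def by simp

lemma hh_le: "0 < i \<Longrightarrow> hh i \<le> i"
  using hh_dvd by (simp add: dvd_imp_le)

lemma hh_dvd_hh: "val2 i \<le> val2 j \<Longrightarrow> hh i dvd hh j"
  unfolding hh_def by (simp add: le_imp_power_dvd)

lemma odd_div_hh: "0 < i \<Longrightarrow> odd (i div hh i)"
  unfolding hh_def val2_def using multiplicity_decompose[of i "2::nat"] by simp

lemma val2_greater:
  assumes "0 < x" "2 * hh i dvd x"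
  shows "val2 i < val2 x"
proof -
  have "(2::nat) ^ Suc (val2 i) dvd x" using assms(2) by (simp add: hh_def)
  then have "Suc (val2 i) \<le> val2 x"
    unfolding val2_def using assms(1) by (intro multiplicity_geI) auto
  then show ?thesis by simp
qed

lemma two_hh_dvd_add_hh:
  assumes "0 < i"
  shows "2 * hh i dvd i + hh i"
proof -
  have "even (i div hh i + 1)" using odd_div_hh[OF assms] by simp
  then have "hh i * 2 dvd hh i * (i div hh i + 1)" by (rule mult_dvd_mono[OF dvd_refl])
  also have "hh i * (i div hh i + 1) = i + hh i" using hh_dvd[of i] by simp
  finally show ?thesis by (simp add: mult.commute)
qed

lemma two_hh_dvd_diff_hh:
  assumes "0 < i"
  shows "2 * hh i dvd i - hh i"
proof -
  have "even (i div hh i - 1)" using odd_div_hh[OF assms] by (simp add: odd_pos)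
  then have "hh i * 2 dvd hh i * (i div hh i - 1)" by (rule mult_dvd_mono[OF dvd_refl])
  also have "hh i * (i div hh i - 1) = i - hh i" using hh_dvd[of i] by (simp add: right_diff_distrib')
  finally show ?thesis by (simp add: mult.commute)
qed

lemma dvd_close_eq:
  fixes x y h :: nat
  assumes "h dvd x" "h dvd y" "x < y + h" "y < x + h"
  shows "x = y"
proof (rule ccontr)
  assume "x \<noteq> y"
  then consider "x < y" | "y < x" by linarith
  then show False
  proof cases
    case 1
    then have "h \<le> y - x" using assms(1,2) by (simp add: dvd_diff_nat dvd_imp_le)
    then show False using 1 assms(4) by linarith
  next
    case 2
    then have "h \<le> x - y" using assms(1,2) by (simp add: dvd_diff_nat dvd_imp_le)
    then show False using 2 assms(3) by linarith
  qed
qed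

definition dyadic_centre :: "nat \<Rightarrow> nat \<Rightarrow> nat \<Rightarrow> bool" where
  "dyadic_centre a b i \<longleftrightarrow> a \<le> i \<and> i \<le> b \<and> b < i + hh i \<and> i - hh i < a"

lemma dyadic_centre_exists:
  assumes "1 \<le> a" "a \<le> b"
  shows "\<exists>i. dyadic_centre a b i"
proof -
  have fin: "finite (val2 ` {a..b})" and ne: "val2 ` {a..b} \<noteq> {}" using assms by auto
  obtain i where i: "i \<in> {a..b}" "val2 i = Max (val2 ` {a..b})" using Max_in[OF fin ne] by auto
  have max: "\<And>k. k \<in> {a..b} \<Longrightarrow> val2 k \<le> val2 i" using i(2) fin by simp
  have pos: "0 < i" using i assms by auto
  have "i + hh i \<notin> {a..b}"
    using max[of "i + hh i"] val2_greater[OF _ two_hh_dvd_add_hh[OF pos]] pos by fastforce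
  moreover have "i - hh i \<notin> {a..b}"
    using max[of "i - hh i"] val2_greater[OF _ two_hh_dvd_diff_hh[OF pos]] assms by fastforce
  ultimately show ?thesis using i hh_pos[of i] unfolding dyadic_centre_def by auto
qed

lemma dyadic_centre_unique:
  assumes "dyadic_centre a b i" "dyadic_centre a b i'"
  shows "i = i'"
proof -
  have close: "i < i' + hh k" "i' < i + hh k" if "k \<in> {i, i'}" for k
    using that assms unfolding dyadic_centre_def by auto
  show ?thesis
  proof (cases "val2 i \<le> val2 i'")
    case True
    then have "hh i dvd i'" using hh_dvd_hh hh_dvd dvd_trans by blast
    then show ?thesis using dvd_close_eq[OF hh_dvd] close[of i] by blast
  next
    case False
    then have "hh i' dvd i" using hh_dvd_hh hh_dvd dvd_trans by (meson nat_le_linear)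
    then show ?thesis using dvd_close_eq[OF _ hh_dvd] close[of i'] by blast
  qed
qed

lemma step_crossing_up:
  fixes f :: "nat \<Rightarrow> 'a::linorder"
  shows "f 0 \<le> u \<Longrightarrow> u < f b \<Longrightarrow> \<exists>j<b. f j \<le> u \<and> u < f (Suc j)"
proof (induction b)
  case (Suc b)
  then show ?case by (cases "u < f b") (auto intro: less_SucI)
qed simp

lemma step_crossing_down:
  fixes g :: "nat \<Rightarrow> 'a::linorder"
  shows "g b \<le> v \<Longrightarrow> v < g 0 \<Longrightarrow> \<exists>t<b. g (Suc t) \<le> v \<and> v < g t"
proof (induction b)
  case (Suc b)
  then show ?case by (cases "g b \<le> v") (auto intro: less_SucI)
qed simp

lemma strict_mono_upto_less_iff:
  fixes f :: "nat \<Rightarrow> 'a::linorder"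
  assumes step: "\<And>k. k < s \<Longrightarrow> f k < f (Suc k)" and "a \<le> s" "b \<le> s"
  shows "f a < f b \<longleftrightarrow> a < b"
proof -
  have mono: "f x < f y" if "x < y" "y \<le> s" for x y
    using that
  proof (induction y)
    case (Suc y)
    then show ?case using step[of y] by (cases "x = y") auto
  qed simp
  show ?thesis using mono[of a b] mono[of b a] assms(2,3) by (cases a b rule: linorder_cases) auto
qed

definition cell :: "(nat \<Rightarrow> nat) \<Rightarrow> (nat \<Rightarrow> nat) \<Rightarrow> nat \<Rightarrow> nat \<Rightarrow> (nat \<times> nat) set" where
  "cell m n j t = {m j..<m (Suc j)} \<times> {n (Suc t)..<n t}"

locale staircase =
  fixes s :: nat and m n :: "nat \<Rightarrow> nat"
  assumes m_0: "m 0 = 0"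
    and m_step: "\<And>k. k < s \<Longrightarrow> m k < m (Suc k)"
    and n_step: "\<And>k. k < s \<Longrightarrow> n (Suc k) < n k"
    and n_s: "n s = 0"
begin

lemma m_less_iff: "a \<le> s \<Longrightarrow> b \<le> s \<Longrightarrow> m a < m b \<longleftrightarrow> a < b"
  by (rule strict_mono_upto_less_iff[where f = m, OF m_step])

lemma n_less_iff: "a \<le> s \<Longrightarrow> b \<le> s \<Longrightarrow> n b < n a \<longleftrightarrow> a < b"
  using strict_mono_upto_less_iff[of s "\<lambda>k. - int (n k)" a b] n_step by simp

lemma in_some_cell:
  assumes "u < m s" "v < n 0"
  shows "\<exists>j<s. \<exists>t<s. (u, v) \<in> cell m n j t"
  using step_crossing_up[of m u s] step_crossing_down[of n s v] assms m_0 n_s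
  unfolding cell_def by fastforce

context
  fixes u v j t
  assumes cell: "(u, v) \<in> cell m n j t" and j: "j < s" and t: "t < s"
begin

lemma m_le_cell_iff: "a \<le> s \<Longrightarrow> m a \<le> u \<longleftrightarrow> a \<le> j"
  using cell j m_less_iff[of a "Suc j"] m_less_iff[of j a] unfolding cell_def by auto

lemma cell_less_m_iff: "b \<le> s \<Longrightarrow> u < m b \<longleftrightarrow> j < b"
  using cell j m_less_iff[of b "Suc j"] m_less_iff[of j b] unfolding cell_def by auto

lemma n_le_cell_iff: "a \<le> s \<Longrightarrow> n a \<le> v \<longleftrightarrow> t < a"
  using cell t n_less_iff[of a "Suc t"] n_less_iff[of t a] unfolding cell_def by auto

lemma cell_less_n_iff: "b \<le> s \<Longrightarrow> v < n b \<longleftrightarrow> b \<le> t"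
  using cell t n_less_iff[of b "Suc t"] n_less_iff[of t b] unfolding cell_def by auto

lemma cell_in_Sset_iff: "(u, v) \<in> Sset s m n \<longleftrightarrow> t < j"
proof -
  have "u < m s" "v < n 0" using cell_less_m_iff[of s] cell_less_n_iff[of 0] j by auto
  then have "(u, v) \<in> Sset s m n \<longleftrightarrow> (\<exists>k\<le>s. t < k \<and> k \<le> j)"
    using m_le_cell_iff n_le_cell_iff unfolding Sset_def initSeg_def by auto
  also have "\<dots> \<longleftrightarrow> t < j" using j by (auto intro!: exI[where x = j])
  finally show ?thesis .
qed

lemma cell_in_Rect_iff:
  assumes "i \<in> {1..<s}"
  shows "(u, v) \<in> Rect s m n i \<longleftrightarrow> dyadic_centre (Suc t) j i"
proof -
  have "i + ell s i \<le> s" "i - hh i \<le> s" using assms unfolding ell_def by auto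
  then have "(u, v) \<in> Rect s m n i \<longleftrightarrow> i \<le> j \<and> j < i + ell s i \<and> t < i \<and> i - hh i \<le> t"
    using assms m_le_cell_iff cell_less_m_iff n_le_cell_iff cell_less_n_iff
    unfolding Rect_def by auto
  then show ?thesis using j unfolding dyadic_centre_def ell_def by auto
qed

end

lemma Rect_bounds: "i \<in> {1..<s} \<Longrightarrow> i + ell s i \<le> s \<and> hh i \<le> i"
  using hh_le unfolding ell_def by auto

lemma Rect_subset_Sset:
  assumes i: "i \<in> {1..<s}"
  shows "Rect s m n i \<subseteq> Sset s m n"
proof
  fix x assume x: "x \<in> Rect s m n i"
  then obtain u v where uv: "x = (u, v)" by force
  have "m (i + ell s i) \<le> m s" "n (i - hh i) \<le> n 0"
    using Rect_bounds[OF i] m_less_iff[of s "i + ell s i"] n_less_iff[of 0 "i - hh i"] i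
    by (auto simp: not_less[symmetric])
  then have "u < m s" "v < n 0" using x uv unfolding Rect_def by auto
  then obtain j t where "j < s" "t < s" "(u, v) \<in> cell m n j t" using in_some_cell by blast
  then show "x \<in> Sset s m n"
    using x uv cell_in_Rect_iff[OF _ _ _ i] cell_in_Sset_iff unfolding dyadic_centre_def by auto
qed

lemma Rect_disjoint:
  assumes i: "i \<in> {1..<s}" and i': "i' \<in> {1..<s}" and "i \<noteq> i'"
  shows "Rect s m n i \<inter> Rect s m n i' = {}"
proof (rule ccontr)
  assume "\<not> ?thesis"
  then obtain u v where uv: "(u, v) \<in> Rect s m n i" "(u, v) \<in> Rect s m n i'" by auto
  then have "u < m s" "v < n 0" using Rect_subset_Sset[OF i] unfolding Sset_def by auto
  then obtain j t where c: "j < s" "t < s" "(u, v) \<in> cell m n j t" using in_some_cell by blast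
  have "dyadic_centre (Suc t) j i" "dyadic_centre (Suc t) j i'"
    using uv cell_in_Rect_iff[OF c(3,1,2)] i i' by auto
  then show False using dyadic_centre_unique \<open>i \<noteq> i'\<close> by blast
qed

lemma Sset_subset_Union_Rect: "Sset s m n \<subseteq> (\<Union>i\<in>{1..<s}. Rect s m n i)"
proof
  fix x assume x: "x \<in> Sset s m n"
  then obtain u v where uv: "x = (u, v)" "u < m s" "v < n 0" unfolding Sset_def by force
  then obtain j t where c: "j < s" "t < s" "(u, v) \<in> cell m n j t" using in_some_cell by blast
  then have "t < j" using cell_in_Sset_iff x uv by auto
  then obtain i where centre: "dyadic_centre (Suc t) j i" using dyadic_centre_exists by fastforce
  then have i: "i \<in> {1..<s}" using c unfolding dyadic_centre_def by auto
  then show "x \<in> (\<Union>i\<in>{1..<s}. Rect s m n i)"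
    using centre cell_in_Rect_iff[OF c(3,1,2) i] uv by blast
qed

end

theorem mainTheorem3:
  fixes s :: nat and m n :: "nat \<Rightarrow> nat"
  assumes "s \<ge> 1"
    and "m 0 = 0"
    and "\<And>k. k < s \<Longrightarrow> m k < m (Suc k)"
    and "\<And>k. k < s \<Longrightarrow> n (Suc k) < n k"
    and "n s = 0"
  shows "(\<forall>i\<in>{1..<s}. i + ell s i \<le> s \<and> hh i \<le> i)
    \<and> (\<forall>i\<in>{1..<s}. \<forall>j\<in>{1..<s}. i \<noteq> j \<longrightarrow> Rect s m n i \<inter> Rect s m n j = {})
    \<and> (\<Union>i\<in>{1..<s}. Rect s m n i) = Sset s m n"
proof -
  interpret staircase s m n
    using assms(2-5) by unfold_locales
  show ?thesis
    using Rect_bounds Rect_disjoint Rect_subset_Sset Sset_subset_Union_Rect by blast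
qed

end
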